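(* Let $\phi$ be 1-Lipschitz with $|\phi''|\le H$, $R=R_{\max}/R_{\min}$, and consider one gradient descent step $W^{(t+1)}=W^{(t)}-\alpha\nabla\hat L(W^{(t)})$ on the logistic loss. Suppose that at time $t$ near-orthogonality of gradients holds with constant $C'\ge25R^2/c+25$, i.e. $\|\nabla f(x_i;W^{(t)})\|_F^2\ge C'n\max_{k\ne i}|\langle\nabla f(x_i;W^{(t)}),\nabla f(x_k;W^{(t)})\rangle|$ for all $i$, and gradient persistence holds with constant $c>0$, i.e. $\|\nabla f(x_i;W^{(t)})\|_F^2\ge c\|x_i\|^2$ for all $i$. If $\alpha\le[5HR_{\max}^2n(10R^2/c+10)]^{-1}$, then for all $i,j\in[n]$, $$\frac{e^{-y_if(x_i;W^{(t+1)})}}{e^{-y_jf(x_j;W^{(t+1)})}}\le\frac{e^{-y_if(x_i;W^{(t)})}}{e^{-y_jf(x_j;W^{(t)})}}\cdot\exp\!\left(-\frac{g_j^{(t)}\alpha cR_{\min}^2}{n}\Big(\frac{g_i^{(t)}}{g_j^{(t)}}-\frac{R^2}{c}\Big)\right)\cdot\exp\!\left(\frac{\alpha R_{\max}^2}{(10R^2/c+10)n}\hat G(W^{(t)})\right).$$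
   Context: $f(x;W)=\sum_{j=1}^ma_j\phi(\langle w_j,x\rangle)$ with $a_j\in\{\pm1/\sqrt m\}$, gradients with respect to $W$. Logistic loss $\ell(z)=\log(1+e^{-z})$, $\hat L(W)=\frac1n\sum_i\ell(y_if(x_i;W))$. Sigmoid loss $g(z)=-\ell'(z)=1/(1+e^z)$, $g_i^{(t)}=g(y_if(x_i;W^{(t)}))$, $\hat G(W)=\frac1n\sum_ig(y_if(x_i;W))$. $R_{\max}=\max_i\|x_i\|$, $R_{\min}=\min_i\|x_i\|$. *)

theory Defs
  imports "HOL-Analysis.Analysis"
begin

definition net :: "(real \<Rightarrow> real) \<Rightarrow> real^'m \<Rightarrow> real^'d^'m \<Rightarrow> real^'d \<Rightarrow> real" where
  "net \<phi> a W x = (\<Sum>j\<in>UNIV. a $ j * \<phi> (W $ j \<bullet> x))"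

text \<open>Logistic loss and sigmoid loss g = - logistic'.\<close>
definition logistic :: "real \<Rightarrow> real" where
  "logistic z = ln (1 + exp (- z))"

definition sigloss :: "real \<Rightarrow> real" where
  "sigloss z = 1 / (1 + exp z)"

definition Lhat :: "(real \<Rightarrow> real) \<Rightarrow> real^'m \<Rightarrow> nat \<Rightarrow> (nat \<Rightarrow> real^'d) \<Rightarrow> (nat \<Rightarrow> real)
    \<Rightarrow> real^'d^'m \<Rightarrow> real" where
  "Lhat \<phi> a n x y W = (1 / real n) * (\<Sum>i<n. logistic (y i * net \<phi> a W (x i)))"

definition Ghat :: "(real \<Rightarrow> real) \<Rightarrow> real^'m \<Rightarrow> nat \<Rightarrow> (nat \<Rightarrow> real^'d) \<Rightarrow> (nat \<Rightarrow> real)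
    \<Rightarrow> real^'d^'m \<Rightarrow> real" where
  "Ghat \<phi> a n x y W = (1 / real n) * (\<Sum>i<n. sigloss (y i * net \<phi> a W (x i)))"

end

theory Submission
  imports Defs
begin

(*
  One gradient step changes the margin of sample k by (\<alpha>/n) g\<^sub>k |\<nabla>f(x\<^sub>k)|\<^sup>2 plus two
  errors: the interference of the other samples, which near-orthogonality of the gradients keeps
  below \<alpha> G Rmax\<^sup>2 / (C' n), and the second-order Taylor remainder of the network, which
  |\<phi>''| \<le> H keeps below (H/2) |\<Delta>W|\<^sup>2 Rmax\<^sup>2. Here G is the mean sigmoid loss and
  |\<Delta>W| \<le> \<alpha> G Rmax, since |\<nabla>f(x)| \<le> |x| for a 1-Lipschitz activation and output weights
  \<plusminus>1/\<surd>m. Gradient persistence bounds the gain of sample i below by c Rmin\<^sup>2, the gain of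
  sample j is at most Rmax\<^sup>2, and the step-size condition makes the errors of both samples
  together at most the exponent \<alpha> Rmax\<^sup>2 G / ((10 R\<^sup>2/c + 10) n).
*)

lemma second_order_Taylor_bound:
  fixes f f' f'' :: "real \<Rightarrow> real"
  assumes d1: "\<And>u. (f has_real_derivative f' u) (at u)"
    and d2: "\<And>u. (f' has_real_derivative f'' u) (at u)"
    and bound: "\<And>u. \<bar>f'' u\<bar> \<le> H"
  shows "\<bar>f (u + h) - f u - f' u * h\<bar> \<le> H / 2 * h\<^sup>2"
proof (cases "h = 0")
  case False
  define diff where "diff = (\<lambda>k::nat. if k = 0 then f else if k = 1 then f' else f'')"
  have "\<exists>t. (if u + h < u then u + h < t \<and> t < u else u < t \<and> t < u + h) \<and>
      f (u + h) = (\<Sum>m<2. diff m u / fact m * (u + h - u) ^ m) + diff 2 t / fact 2 * (u + h - u)\<^sup>2"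
    using False by (intro Taylor[where a = "min u (u + h)" and b = "max u (u + h)"])
      (auto simp: diff_def d1 d2 less_2_cases_iff)
  then obtain t where "f (u + h) = f u + f' u * h + f'' t / 2 * h\<^sup>2"
    by (auto simp: diff_def eval_nat_numeral)
  moreover have "\<bar>f'' t / 2 * h\<^sup>2\<bar> \<le> H / 2 * h\<^sup>2"
    using bound[of t] by (simp add: abs_mult mult_right_mono)
  ultimately show ?thesis by simp
qed simp

lemma Lipschitz_imp_abs_deriv_le:
  fixes f :: "real \<Rightarrow> real"
  assumes lip: "\<And>u v. \<bar>f u - f v\<bar> \<le> L * \<bar>u - v\<bar>"
    and deriv: "(f has_real_derivative D) (at u)"
  shows "\<bar>D\<bar> \<le> L"
proof -
  have "0 \<le> L" using order_trans[OF abs_ge_zero lip[of 1 0]] by simp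
  have "((\<lambda>v. \<bar>(f v - f u) / (v - u)\<bar>) \<longlongrightarrow> \<bar>D\<bar>) (at u)"
    using deriv by (intro tendsto_rabs) (simp add: DERIV_def has_field_derivative_iff)
  moreover have "\<bar>(f v - f u) / (v - u)\<bar> \<le> L" for v
    using lip[of v u] \<open>0 \<le> L\<close> by (cases "v = u") (simp_all add: abs_divide divide_le_eq)
  ultimately show ?thesis
    by (intro tendsto_upperbound[of _ _ "at u"] always_eventually) auto
qed

lemma GDERIV_unique:
  fixes f :: "'a::real_inner \<Rightarrow> real"
  assumes "GDERIV f w :> A" and "GDERIV f w :> B"
  shows "A = B"
proof -
  have "(\<lambda>h. h \<bullet> A) = (\<lambda>h. h \<bullet> B)"
    using has_derivative_unique assms unfolding gderiv_def by blast
  then have "(A - B) \<bullet> (A - B) = 0" by (metis inner_diff_right right_minus_eq)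
  then show ?thesis by simp
qed

lemma power2_norm_vec: "(norm (v :: 'a::real_inner^'n))\<^sup>2 = (\<Sum>j\<in>UNIV. (norm (v $ j))\<^sup>2)"
  by (simp add: power2_norm_eq_inner inner_vec_def)

lemma norm_signed_weighted_sum_le:
  fixes G :: "nat \<Rightarrow> 'a::real_normed_vector"
  assumes "\<And>k. k < n \<Longrightarrow> \<bar>y k\<bar> = 1" and "\<And>k. k < n \<Longrightarrow> 0 \<le> g k"
    and "\<And>k. k < n \<Longrightarrow> norm (G k) \<le> B"
  shows "norm (\<Sum>k<n. (g k * y k) *\<^sub>R G k) \<le> (\<Sum>k<n. g k) * B"
proof -
  have "norm (\<Sum>k<n. (g k * y k) *\<^sub>R G k) \<le> (\<Sum>k<n. norm ((g k * y k) *\<^sub>R G k))"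
    by (rule norm_sum)
  also have "\<dots> = (\<Sum>k<n. g k * norm (G k))"
    using assms(1,2) by (intro sum.cong) (auto simp: abs_mult)
  also have "\<dots> \<le> (\<Sum>k<n. g k * B)"
    using assms(2,3) by (intro sum_mono mult_left_mono) auto
  finally show ?thesis by (simp add: sum_distrib_right)
qed

lemma signed_weighted_sum_inner_diag:
  fixes G :: "nat \<Rightarrow> 'a::real_inner"
  assumes k: "k < n" and y: "\<And>l. l < n \<Longrightarrow> \<bar>y l\<bar> = 1" and g: "\<And>l. l < n \<Longrightarrow> 0 \<le> g l"
    and "0 \<le> \<epsilon>" and off_diag: "\<And>l. l < n \<Longrightarrow> l \<noteq> k \<Longrightarrow> \<bar>G l \<bullet> G k\<bar> \<le> \<epsilon>"
  shows "\<bar>y k * ((\<Sum>l<n. (g l * y l) *\<^sub>R G l) \<bullet> G k) - g k * (norm (G k))\<^sup>2\<bar> \<le> \<epsilon> * (\<Sum>l<n. g l)"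
proof -
  have "y k * y k = 1" using y[OF k] by (metis abs_mult_self_eq mult_1_right)
  then have "y k * ((\<Sum>l<n. (g l * y l) *\<^sub>R G l) \<bullet> G k) - g k * (norm (G k))\<^sup>2
      = (\<Sum>l\<in>{..<n} - {k}. g l * y l * y k * (G l \<bullet> G k))"
    using k
    by (simp add: inner_sum_left sum_distrib_left sum.remove power2_norm_eq_inner algebra_simps)
  also have "\<bar>\<dots>\<bar> \<le> (\<Sum>l\<in>{..<n} - {k}. g l * \<epsilon>)"
    using y[OF k] y g off_diag
    by (intro sum_abs[THEN order_trans] sum_mono) (auto simp: abs_mult intro: mult_left_mono)
  also have "\<dots> \<le> (\<Sum>l<n. g l * \<epsilon>)"
    using g \<open>0 \<le> \<epsilon>\<close> by (intro sum_mono2) auto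
  finally show ?thesis by (simp add: sum_distrib_left mult.commute)
qed

definition net_grad :: "(real \<Rightarrow> real) \<Rightarrow> real^'m \<Rightarrow> real^'d^'m \<Rightarrow> real^'d \<Rightarrow> real^'d^'m" where
  "net_grad \<phi>' a W x = (\<chi> j. (a $ j * \<phi>' (W $ j \<bullet> x)) *\<^sub>R x)"

lemma inner_net_grad:
  "D \<bullet> net_grad \<phi>' a W x = (\<Sum>j\<in>UNIV. a $ j * \<phi>' (W $ j \<bullet> x) * (D $ j \<bullet> x))"
  unfolding net_grad_def by (subst inner_vec_def) (simp add: inner_scaleR_right mult.commute)

lemma net_has_gderiv:
  fixes W :: "real^'d^'m"
  assumes "\<And>u. (\<phi> has_real_derivative \<phi>' u) (at u)"
  shows "GDERIV (\<lambda>V. net \<phi> a V x) W :> net_grad \<phi>' a W x"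
proof -
  have row: "((\<lambda>V::real^'d^'m. V $ j \<bullet> x) has_derivative (\<lambda>D. D $ j \<bullet> x)) (at W)" for j
    by (intro bounded_linear_imp_has_derivative
        bounded_linear_compose[OF bounded_linear_inner_left bounded_linear_vec_nth])
  have "((\<lambda>V. \<Sum>j\<in>UNIV. a $ j * \<phi> (V $ j \<bullet> x)) has_derivative
      (\<lambda>D. \<Sum>j\<in>UNIV. a $ j * ((D $ j \<bullet> x) * \<phi>' (W $ j \<bullet> x)))) (at W)"
    by (intro has_derivative_sum has_derivative_mult_right DERIV_compose_FDERIV[OF assms row])
  then show ?thesis
    unfolding gderiv_def net_def[abs_def] inner_net_grad by (simp add: mult_ac)
qed

lemma norm_net_grad_le:
  assumes "\<And>u. \<bar>\<phi>' u\<bar> \<le> 1"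
  shows "norm (net_grad \<phi>' a W x) \<le> norm a * norm x"
proof -
  have "(norm (net_grad \<phi>' a W x))\<^sup>2 = (\<Sum>j\<in>UNIV. (a $ j)\<^sup>2 * (\<phi>' (W $ j \<bullet> x))\<^sup>2 * (norm x)\<^sup>2)"
    by (simp add: net_grad_def power2_norm_vec power_mult_distrib)
  also have "\<dots> \<le> (\<Sum>j\<in>UNIV. (a $ j)\<^sup>2 * (norm x)\<^sup>2)"
    using assms by (intro sum_mono mult_right_mono mult_left_le)
      (auto simp: abs_le_square_iff[of _ 1, simplified])
  also have "\<dots> = (norm a * norm x)\<^sup>2"
    by (simp add: power2_norm_vec[of a] power_mult_distrib sum_distrib_right)
  finally show ?thesis by (simp add: power2_le_iff_abs_le)
qed

lemma norm_gderiv_net_le: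
  assumes "GDERIV (\<lambda>V. net \<phi> a V x) W :> G"
    and "\<And>u. (\<phi> has_real_derivative \<phi>' u) (at u)" and "\<And>u. \<bar>\<phi>' u\<bar> \<le> 1"
  shows "norm G \<le> norm a * norm x"
  using GDERIV_unique[OF assms(1) net_has_gderiv[OF assms(2)]] norm_net_grad_le[OF assms(3)] by simp

lemma net_second_order_bound:
  assumes d1: "\<And>u. (\<phi> has_real_derivative \<phi>' u) (at u)"
    and d2: "\<And>u. (\<phi>' has_real_derivative \<phi>'' u) (at u)"
    and bound: "\<And>u. \<bar>\<phi>'' u\<bar> \<le> H"
  shows "\<bar>net \<phi> a (W + D) x - net \<phi> a W x - D \<bullet> net_grad \<phi>' a W x\<bar>
     \<le> norm a * (H / 2) * (norm D)\<^sup>2 * (norm x)\<^sup>2"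
proof -
  have "0 \<le> H" using bound[of 0] by linarith
  let ?r = "\<lambda>j. \<phi> (W $ j \<bullet> x + D $ j \<bullet> x) - \<phi> (W $ j \<bullet> x) - \<phi>' (W $ j \<bullet> x) * (D $ j \<bullet> x)"
  have "net \<phi> a (W + D) x - net \<phi> a W x - D \<bullet> net_grad \<phi>' a W x = (\<Sum>j\<in>UNIV. a $ j * ?r j)"
    unfolding inner_net_grad net_def sum_subtractf[symmetric]
    by (intro sum.cong) (simp_all add: inner_add_left right_diff_distrib)
  also have "\<bar>\<dots>\<bar> \<le> (\<Sum>j\<in>UNIV. norm a * (H / 2 * ((norm (D $ j))\<^sup>2 * (norm x)\<^sup>2)))"
  proof (intro sum_abs[THEN order_trans] sum_mono)
    fix j
    have "(D $ j \<bullet> x)\<^sup>2 = \<bar>D $ j \<bullet> x\<bar>\<^sup>2" by simp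
    also have "\<dots> \<le> (norm (D $ j) * norm x)\<^sup>2"
      by (intro power_mono Cauchy_Schwarz_ineq2) simp
    finally have "H / 2 * (D $ j \<bullet> x)\<^sup>2 \<le> H / 2 * ((norm (D $ j))\<^sup>2 * (norm x)\<^sup>2)"
      using \<open>0 \<le> H\<close> by (intro mult_left_mono) (simp_all add: power_mult_distrib)
    then have "\<bar>?r j\<bar> \<le> H / 2 * ((norm (D $ j))\<^sup>2 * (norm x)\<^sup>2)"
      using second_order_Taylor_bound[OF d1 d2 bound, of "W $ j \<bullet> x" "D $ j \<bullet> x"] by linarith
    then show "\<bar>a $ j * ?r j\<bar> \<le> norm a * (H / 2 * ((norm (D $ j))\<^sup>2 * (norm x)\<^sup>2))"
      unfolding abs_mult using component_le_norm_cart[of a j] by (intro mult_mono) auto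
  qed
  also have "\<dots> = norm a * (H / 2) * (norm D)\<^sup>2 * (norm x)\<^sup>2"
    by (simp add: power2_norm_vec[of D] sum_distrib_left sum_distrib_right mult_ac)
  finally show ?thesis .
qed

lemma norm_pm_inverse_sqrt_card:
  fixes a :: "real^'m"
  assumes "\<And>j. a $ j = 1 / sqrt (real CARD('m)) \<or> a $ j = - 1 / sqrt (real CARD('m))"
  shows "norm a = 1"
proof -
  have "(a $ j)\<^sup>2 = 1 / real CARD('m)" for j
    using assms[of j] by (auto simp: power_divide)
  then have "(norm a)\<^sup>2 = 1"
    by (simp add: power2_norm_vec)
  then show ?thesis using norm_ge_zero[of a] by (auto simp: power2_eq_1_iff)
qed

lemma logistic_has_real_derivative: "(logistic has_real_derivative - sigloss z) (at z)"
proof -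
  have "((\<lambda>z. ln (1 + exp (- z))) has_real_derivative 1 / (1 + exp (- z)) * - exp (- z)) (at z)"
    by (auto intro!: derivative_eq_intros simp: add_pos_pos)
  moreover have "1 / (1 + exp (- z)) * - exp (- z) = - sigloss z"
    unfolding sigloss_def by (simp add: field_simps exp_minus)
  ultimately show ?thesis unfolding logistic_def[abs_def] by simp
qed

lemma Lhat_has_gderiv:
  assumes "\<And>k. k < n \<Longrightarrow> GDERIV (\<lambda>V. net \<phi> a V (x k)) W :> G k"
  shows "GDERIV (Lhat \<phi> a n x y) W :>
     - (1 / real n) *\<^sub>R (\<Sum>k<n. (sigloss (y k * net \<phi> a W (x k)) * y k) *\<^sub>R G k)"
proof -
  have "((\<lambda>V. logistic (y k * net \<phi> a V (x k))) has_derivative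
      (\<lambda>D. y k * (D \<bullet> G k) * - sigloss (y k * net \<phi> a W (x k)))) (at W)" if "k < n" for k
    using assms[OF that] unfolding gderiv_def
    by (intro DERIV_compose_FDERIV[OF logistic_has_real_derivative] has_derivative_mult_right)
  then have "((\<lambda>V. 1 / real n * (\<Sum>k<n. logistic (y k * net \<phi> a V (x k)))) has_derivative
      (\<lambda>D. 1 / real n * (\<Sum>k<n. y k * (D \<bullet> G k) * - sigloss (y k * net \<phi> a W (x k))))) (at W)"
    by (intro has_derivative_mult_right has_derivative_sum) auto
  then show ?thesis
    unfolding gderiv_def Lhat_def[abs_def]
    by (simp add: inner_sum_right sum_distrib_left sum_negf[symmetric] mult_ac)
qed

lemma sigloss_pos: "0 < sigloss z"
  by (simp add: sigloss_def add_pos_pos)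

lemma sigloss_le_1: "sigloss z \<le> 1"
  by (simp add: sigloss_def add_pos_pos)

lemma Ghat_nonneg: "0 \<le> Ghat \<phi> a n x y W"
  by (simp add: Ghat_def sum_nonneg less_imp_le[OF sigloss_pos])

lemma Ghat_le_1: "Ghat \<phi> a n x y W \<le> 1"
proof -
  have "(\<Sum>i<n. sigloss (y i * net \<phi> a W (x i))) \<le> (\<Sum>i<n. 1)"
    by (rule sum_mono) (rule sigloss_le_1)
  then show ?thesis by (cases "n = 0") (simp_all add: Ghat_def divide_le_eq_1)
qed

lemma gd_step_margin_change:
  fixes \<phi> \<phi>' \<phi>'' :: "real \<Rightarrow> real" and a :: "real^'m" and W :: "real^'d^'m"
    and x :: "nat \<Rightarrow> real^'d" and Gf :: "nat \<Rightarrow> real^'d^'m"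
  assumes d1: "\<And>u. (\<phi> has_real_derivative \<phi>' u) (at u)"
    and d2: "\<And>u. (\<phi>' has_real_derivative \<phi>'' u) (at u)"
    and bound: "\<And>u. \<bar>\<phi>'' u\<bar> \<le> H"
    and d1_le: "\<And>u. \<bar>\<phi>' u\<bar> \<le> 1"
    and a: "norm a = 1"
    and n: "1 \<le> n"
    and y: "\<And>l. l < n \<Longrightarrow> y l = 1 \<or> y l = -1"
    and grad_f: "\<And>l. l < n \<Longrightarrow> GDERIV (\<lambda>V. net \<phi> a V (x l)) W :> Gf l"
    and grad_L: "GDERIV (Lhat \<phi> a n x y) W :> DL"
    and "0 < C'"
    and near_orth: "\<And>l. l < n \<Longrightarrow> l \<noteq> k \<Longrightarrow> (norm (Gf k))\<^sup>2 \<ge> C' * real n * \<bar>Gf k \<bullet> Gf l\<bar>"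
    and "0 < \<alpha>"
    and r: "\<And>l. l < n \<Longrightarrow> norm (x l) \<le> r"
    and k: "k < n"
  shows "\<bar>y k * (net \<phi> a (W - \<alpha> *\<^sub>R DL) (x k) - net \<phi> a W (x k))
           - \<alpha> / real n * sigloss (y k * net \<phi> a W (x k)) * (norm (Gf k))\<^sup>2\<bar>
         \<le> \<alpha> * Ghat \<phi> a n x y W * r\<^sup>2 / (C' * real n)
           + H / 2 * (\<alpha> * Ghat \<phi> a n x y W * r)\<^sup>2 * r\<^sup>2"
proof -
  define g where "g l = sigloss (y l * net \<phi> a W (x l))" for l
  define S where "S = (\<Sum>l<n. (g l * y l) *\<^sub>R Gf l)"
  define s where "s = \<alpha> / real n"
  have "0 < real n" using n by simp
  have "0 \<le> H" using bound[of 0] by linarith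
  have "0 \<le> s" using \<open>0 < \<alpha>\<close> by (simp add: s_def)
  have y_abs: "\<And>l. l < n \<Longrightarrow> \<bar>y l\<bar> = 1" using y by force
  have g_nonneg: "\<And>l. 0 \<le> g l" by (simp add: g_def less_imp_le[OF sigloss_pos])
  have sum_g: "(\<Sum>l<n. g l) = real n * Ghat \<phi> a n x y W"
    using \<open>0 < real n\<close> by (simp add: Ghat_def g_def)
  have Gf: "\<And>l. l < n \<Longrightarrow> Gf l = net_grad \<phi>' a W (x l)"
    using GDERIV_unique[OF grad_f net_has_gderiv[OF d1]] .
  have Gf_le: "norm (Gf l) \<le> r" if "l < n" for l
    using norm_gderiv_net_le[OF grad_f[OF that] d1 d1_le] a r[OF that] by simp
  have step: "W - \<alpha> *\<^sub>R DL = W + s *\<^sub>R S"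
    using GDERIV_unique[OF grad_L Lhat_has_gderiv[OF grad_f]]
    by (simp add: S_def s_def g_def scaleR_scaleR)
  define lin where "lin = y k * (S \<bullet> Gf k) - g k * (norm (Gf k))\<^sup>2"
  define rem where "rem = net \<phi> a (W + s *\<^sub>R S) (x k) - net \<phi> a W (x k) - (s *\<^sub>R S) \<bullet> Gf k"
  have linear: "\<bar>lin\<bar> \<le> r\<^sup>2 / (C' * real n) * (\<Sum>l<n. g l)"
    unfolding lin_def S_def
  proof (rule signed_weighted_sum_inner_diag[OF k y_abs g_nonneg])
    show "0 \<le> r\<^sup>2 / (C' * real n)"
      using \<open>0 < C'\<close> \<open>0 < real n\<close> by simp
  next
    fix l assume "l < n" "l \<noteq> k"
    have "C' * real n * \<bar>Gf l \<bullet> Gf k\<bar> \<le> (norm (Gf k))\<^sup>2"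
      using near_orth[OF \<open>l < n\<close> \<open>l \<noteq> k\<close>] by (simp add: inner_commute)
    also have "\<dots> \<le> r\<^sup>2"
      using Gf_le[OF k] by (intro power_mono) auto
    finally show "\<bar>Gf l \<bullet> Gf k\<bar> \<le> r\<^sup>2 / (C' * real n)"
      using \<open>0 < C'\<close> \<open>0 < real n\<close> by (simp add: le_divide_eq mult.commute)
  qed
  have "norm (s *\<^sub>R S) \<le> s * ((\<Sum>l<n. g l) * r)"
    unfolding S_def using \<open>0 \<le> s\<close>
    by (auto intro!: mult_left_mono norm_signed_weighted_sum_le y_abs g_nonneg Gf_le)
  then have norm_step: "(norm (s *\<^sub>R S))\<^sup>2 * (norm (x k))\<^sup>2 \<le> (s * ((\<Sum>l<n. g l) * r))\<^sup>2 * r\<^sup>2"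
    using r[OF k] by (intro mult_mono power_mono) auto
  have "\<bar>rem\<bar> \<le> H / 2 * ((norm (s *\<^sub>R S))\<^sup>2 * (norm (x k))\<^sup>2)"
    using net_second_order_bound[OF d1 d2 bound, of a W "s *\<^sub>R S" "x k"] a Gf[OF k]
    by (simp add: rem_def mult.assoc)
  also have "\<dots> \<le> H / 2 * ((s * ((\<Sum>l<n. g l) * r))\<^sup>2 * r\<^sup>2)"
    using norm_step \<open>0 \<le> H\<close> by (intro mult_left_mono) auto
  finally have curvature: "\<bar>rem\<bar> \<le> H / 2 * (s * ((\<Sum>l<n. g l) * r))\<^sup>2 * r\<^sup>2"
    by (simp add: mult.assoc)
  have "y k * (net \<phi> a (W + s *\<^sub>R S) (x k) - net \<phi> a W (x k)) - s * g k * (norm (Gf k))\<^sup>2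
      = s * lin + y k * rem"
    by (simp add: lin_def rem_def algebra_simps)
  also have "\<bar>\<dots>\<bar> \<le> s * \<bar>lin\<bar> + \<bar>rem\<bar>"
    using abs_triangle_ineq[of "s * lin" "y k * rem"] y_abs[OF k] \<open>0 \<le> s\<close> by (simp add: abs_mult)
  also have "\<dots> \<le> s * (r\<^sup>2 / (C' * real n) * (\<Sum>l<n. g l)) + H / 2 * (s * ((\<Sum>l<n. g l) * r))\<^sup>2 * r\<^sup>2"
    using linear curvature \<open>0 \<le> s\<close> by (intro add_mono mult_left_mono)
  finally show ?thesis
    using \<open>0 < real n\<close> by (simp add: step s_def sum_g g_def[symmetric] power_mult_distrib mult_ac)
qed

lemma Min_Max_norm_bounds:
  fixes x :: "nat \<Rightarrow> 'a::real_normed_vector"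
  assumes "1 \<le> n" and "\<And>k. k < n \<Longrightarrow> x k \<noteq> 0" and "k < n"
  shows "0 < Min (norm ` x ` {..<n})" and "Min (norm ` x ` {..<n}) \<le> norm (x k)"
    and "norm (x k) \<le> Max (norm ` x ` {..<n})"
proof -
  have "norm ` x ` {..<n} \<noteq> {}" using assms(1) by (simp add: lessThan_empty_iff)
  then have "Min (norm ` x ` {..<n}) \<in> norm ` x ` {..<n}" by (intro Min_in) auto
  then show "0 < Min (norm ` x ` {..<n})" using assms(2) by auto
  show "Min (norm ` x ` {..<n}) \<le> norm (x k)" "norm (x k) \<le> Max (norm ` x ` {..<n})"
    using assms(3) by (auto intro: Min_le Max_ge)
qed

(* The interference takes 4/5 and the curvature 1/5 of the budget;
   5/2 * K \<le> C is the hypothesis C' \<ge> 25 R\<^sup>2/c + 25. *)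
lemma gd_step_error_le:
  fixes \<alpha> G r C K H :: real
  assumes "0 < \<alpha>" "0 \<le> G" "G \<le> 1" "0 < K" "5 / 2 * K \<le> C" "0 \<le> H" "1 \<le> n"
    and \<alpha>_le: "\<alpha> \<le> 1 / (5 * H * r\<^sup>2 * real n * K)"
  shows "2 * (\<alpha> * G * r\<^sup>2 / (C * real n) + H / 2 * (\<alpha> * G * r)\<^sup>2 * r\<^sup>2)
    \<le> \<alpha> * r\<^sup>2 / (K * real n) * G"
proof -
  have "0 < real n" using \<open>1 \<le> n\<close> by simp
  have "0 < 5 * H * r\<^sup>2 * real n * K"
    using \<alpha>_le \<open>0 < \<alpha>\<close> \<open>0 \<le> H\<close> \<open>0 < K\<close> \<open>0 < real n\<close>
    by (smt (verit) divide_eq_0_iff mult_nonneg_nonneg zero_le_power2)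
  then have "\<alpha> * H * r\<^sup>2 * (5 * real n * K) \<le> 1"
    using \<alpha>_le by (simp add: le_divide_eq mult_ac)
  then have \<alpha>H: "\<alpha> * H * r\<^sup>2 \<le> 1 / (5 * real n * K)"
    using \<open>0 < K\<close> \<open>0 < real n\<close> by (simp add: le_divide_eq)
  have "2 * (\<alpha> * G * r\<^sup>2 / (C * real n)) \<le> 2 * (\<alpha> * G * r\<^sup>2 / (5 / 2 * K * real n))"
    using assms \<open>0 < real n\<close> by (intro mult_left_mono divide_left_mono mult_right_mono) auto
  also have "\<dots> = 4 / 5 * (\<alpha> * r\<^sup>2 / (K * real n) * G)"
    by (simp add: mult_ac)
  finally have interference:
    "2 * (\<alpha> * G * r\<^sup>2 / (C * real n)) \<le> 4 / 5 * (\<alpha> * r\<^sup>2 / (K * real n) * G)" .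
  have "H / 2 * (\<alpha> * G * r)\<^sup>2 * r\<^sup>2 = (\<alpha> * H * r\<^sup>2) * G * (\<alpha> * G * r\<^sup>2) / 2"
    by (simp add: power2_eq_square)
  also have "\<dots> \<le> 1 / (5 * real n * K) * 1 * (\<alpha> * G * r\<^sup>2) / 2"
    using assms \<alpha>H by (intro divide_right_mono mult_right_mono mult_mono) auto
  also have "\<dots> = 1 / 10 * (\<alpha> * r\<^sup>2 / (K * real n) * G)"
    by (simp add: mult_ac)
  finally have curvature: "H / 2 * (\<alpha> * G * r)\<^sup>2 * r\<^sup>2 \<le> 1 / 10 * (\<alpha> * r\<^sup>2 / (K * real n) * G)" .
  then have "2 * (H / 2 * (\<alpha> * G * r)\<^sup>2 * r\<^sup>2) \<le> 1 / 5 * (\<alpha> * r\<^sup>2 / (K * real n) * G)"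
    by (simp add: mult_ac)
  with interference have "2 * (\<alpha> * G * r\<^sup>2 / (C * real n)) + 2 * (H / 2 * (\<alpha> * G * r)\<^sup>2 * r\<^sup>2)
      \<le> 4 / 5 * (\<alpha> * r\<^sup>2 / (K * real n) * G) + 1 / 5 * (\<alpha> * r\<^sup>2 / (K * real n) * G)"
    by (rule add_mono)
  then show ?thesis
    unfolding distrib_left by (simp add: mult_ac)
qed

lemma exp_margin_ratio_le:
  fixes mi mj mi' mj' :: real
  assumes "\<bar>mi' - mi - s * gi * Ni\<bar> \<le> e" and "\<bar>mj' - mj - s * gj * Nj\<bar> \<le> e"
    and "lo \<le> Ni" and "Nj \<le> hi" and "0 \<le> s * gi" and "0 \<le> s * gj" and "2 * e \<le> B"
  shows "exp (- mi') / exp (- mj')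
    \<le> exp (- mi) / exp (- mj) * exp (s * gj * hi - s * gi * lo) * exp B"
proof -
  have "s * gi * lo \<le> s * gi * Ni" and "s * gj * Nj \<le> s * gj * hi"
    using assms(3-6) by (simp_all add: mult_left_mono)
  then have "- mi' + mj' \<le> - mi + mj + (s * gj * hi - s * gi * lo) + B"
    using assms(1,2,7) by (simp add: abs_le_iff)
  then show ?thesis by (simp add: exp_diff[symmetric] exp_add[symmetric])
qed

theorem mainTheorem9:
  fixes \<phi> \<phi>' \<phi>'' :: "real \<Rightarrow> real"
    and a :: "real^'m" and W :: "real^'d^'m"
    and n :: nat and x :: "nat \<Rightarrow> real^'d" and y :: "nat \<Rightarrow> real"
    and H c C' \<alpha> :: real
    and Gf :: "nat \<Rightarrow> real^'d^'m" and DL :: "real^'d^'m"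
  assumes phi_lip: "\<And>u v. \<bar>\<phi> u - \<phi> v\<bar> \<le> \<bar>u - v\<bar>"
    and phi_d1: "\<And>u. (\<phi> has_real_derivative \<phi>' u) (at u)"
    and phi_d2: "\<And>u. (\<phi>' has_real_derivative \<phi>'' u) (at u)"
    and phi_H: "\<And>u. \<bar>\<phi>'' u\<bar> \<le> H"
    and a_pm: "\<And>j. a $ j = 1 / sqrt (real CARD('m)) \<or> a $ j = - 1 / sqrt (real CARD('m))"
    and n_pos: "n \<ge> 1"
    and y_pm: "\<And>i. i < n \<Longrightarrow> y i = 1 \<or> y i = -1"
    and x_nz: "\<And>i. i < n \<Longrightarrow> x i \<noteq> 0"
    and grad_f: "\<And>i. i < n \<Longrightarrow> GDERIV (\<lambda>V. net \<phi> a V (x i)) W :> Gf i"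
    and grad_L: "GDERIV (Lhat \<phi> a n x y) W :> DL"
    and c_pos: "c > 0"
    and C'_ge: "C' \<ge> 25 * ((Max (norm ` x ` {..<n}) / Min (norm ` x ` {..<n}))\<^sup>2) / c + 25"
    and near_orth: "\<And>i k. i < n \<Longrightarrow> k < n \<Longrightarrow> k \<noteq> i \<Longrightarrow>
        (norm (Gf i))\<^sup>2 \<ge> C' * real n * \<bar>Gf i \<bullet> Gf k\<bar>"
    and persist: "\<And>i. i < n \<Longrightarrow> (norm (Gf i))\<^sup>2 \<ge> c * (norm (x i))\<^sup>2"
    and alpha_pos: "\<alpha> > 0"
    and alpha_le: "\<alpha> \<le> 1 / (5 * H * (Max (norm ` x ` {..<n}))\<^sup>2 * real n *
        (10 * ((Max (norm ` x ` {..<n}) / Min (norm ` x ` {..<n}))\<^sup>2) / c + 10))"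
  shows "\<forall>i<n. \<forall>j<n.
    (let Rmax = Max (norm ` x ` {..<n}); Rmin = Min (norm ` x ` {..<n}); R = Rmax / Rmin;
         W' = W - \<alpha> *\<^sub>R DL;
         g = (\<lambda>k. sigloss (y k * net \<phi> a W (x k)))
     in exp (- y i * net \<phi> a W' (x i)) / exp (- y j * net \<phi> a W' (x j))
        \<le> exp (- y i * net \<phi> a W (x i)) / exp (- y j * net \<phi> a W (x j))
           * exp (- (g j * \<alpha> * c * Rmin\<^sup>2 / real n) * (g i / g j - R\<^sup>2 / c))
           * exp (\<alpha> * Rmax\<^sup>2 / ((10 * R\<^sup>2 / c + 10) * real n) * Ghat \<phi> a n x y W))"
proof (intro allI impI)
  fix i j assume i: "i < n" and j: "j < n"
  define Rmax where "Rmax = Max (norm ` x ` {..<n})"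
  define Rmin where "Rmin = Min (norm ` x ` {..<n})"
  define g where "g k = sigloss (y k * net \<phi> a W (x k))" for k
  define K where "K = 10 * (Rmax / Rmin)\<^sup>2 / c + 10"
  have Rmin: "0 < Rmin" "Rmin \<le> norm (x i)" and Rmax: "\<And>k. k < n \<Longrightarrow> norm (x k) \<le> Rmax"
    using Min_Max_norm_bounds[of n x, OF n_pos x_nz] i unfolding Rmin_def Rmax_def by blast+
  have "0 < K" and "5 / 2 * K \<le> C'"
    using c_pos C'_ge by (simp_all add: K_def Rmax_def Rmin_def add_nonneg_pos)
  have d1_le: "\<And>u. \<bar>\<phi>' u\<bar> \<le> 1"
    by (rule Lipschitz_imp_abs_deriv_le[of \<phi> 1, OF _ phi_d1]) (simp add: phi_lip)
  have change: "\<And>k. k < n \<Longrightarrow> \<bar>y k * net \<phi> a (W - \<alpha> *\<^sub>R DL) (x k) - y k * net \<phi> a W (x k)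
        - \<alpha> / real n * g k * (norm (Gf k))\<^sup>2\<bar>
      \<le> \<alpha> * Ghat \<phi> a n x y W * Rmax\<^sup>2 / (C' * real n)
        + H / 2 * (\<alpha> * Ghat \<phi> a n x y W * Rmax)\<^sup>2 * Rmax\<^sup>2"
    using gd_step_margin_change[OF phi_d1 phi_d2 phi_H d1_le norm_pm_inverse_sqrt_card[OF a_pm]
        n_pos y_pm grad_f grad_L _ near_orth alpha_pos Rmax] \<open>0 < K\<close> \<open>5 / 2 * K \<le> C'\<close>
    by (simp add: g_def right_diff_distrib)
  have "norm (Gf j) \<le> Rmax"
    using norm_gderiv_net_le[OF grad_f[OF j] phi_d1 d1_le] norm_pm_inverse_sqrt_card[OF a_pm]
      Rmax[OF j]
    by simp
  then have upper: "(norm (Gf j))\<^sup>2 \<le> Rmax\<^sup>2"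
    by (intro power_mono) auto
  have "c * Rmin\<^sup>2 \<le> c * (norm (x i))\<^sup>2"
    using Rmin c_pos by (intro mult_left_mono power_mono) auto
  then have lower: "c * Rmin\<^sup>2 \<le> (norm (Gf i))\<^sup>2"
    using persist[OF i] by linarith
  have g_nonneg: "0 \<le> \<alpha> / real n * g k" for k
    using alpha_pos sigloss_pos[of "y k * net \<phi> a W (x k)"] by (simp add: g_def)
  have error: "2 * (\<alpha> * Ghat \<phi> a n x y W * Rmax\<^sup>2 / (C' * real n)
      + H / 2 * (\<alpha> * Ghat \<phi> a n x y W * Rmax)\<^sup>2 * Rmax\<^sup>2)
      \<le> \<alpha> * Rmax\<^sup>2 / (K * real n) * Ghat \<phi> a n x y W"
    using alpha_le phi_H[of 0]
    by (intro gd_step_error_le[OF alpha_pos Ghat_nonneg Ghat_le_1 \<open>0 < K\<close> \<open>5 / 2 * K \<le> C'\<close> _ n_pos])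
      (simp_all add: K_def Rmax_def Rmin_def)
  have exponent: "\<alpha> / real n * g j * Rmax\<^sup>2 - \<alpha> / real n * g i * (c * Rmin\<^sup>2)
      = - (g j * \<alpha> * c * Rmin\<^sup>2 / real n) * (g i / g j - (Rmax / Rmin)\<^sup>2 / c)"
    using sigloss_pos[of "y j * net \<phi> a W (x j)"] Rmin c_pos n_pos
    by (simp add: g_def field_simps power_divide less_imp_neq[symmetric])
  show "let Rmax = Max (norm ` x ` {..<n}); Rmin = Min (norm ` x ` {..<n}); R = Rmax / Rmin;
      W' = W - \<alpha> *\<^sub>R DL; g = (\<lambda>k. sigloss (y k * net \<phi> a W (x k)))
    in exp (- y i * net \<phi> a W' (x i)) / exp (- y j * net \<phi> a W' (x j))
      \<le> exp (- y i * net \<phi> a W (x i)) / exp (- y j * net \<phi> a W (x j))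
        * exp (- (g j * \<alpha> * c * Rmin\<^sup>2 / real n) * (g i / g j - R\<^sup>2 / c))
        * exp (\<alpha> * Rmax\<^sup>2 / ((10 * R\<^sup>2 / c + 10) * real n) * Ghat \<phi> a n x y W)"
    using exp_margin_ratio_le[OF change[OF i] change[OF j] lower upper g_nonneg g_nonneg error]
    unfolding Let_def exponent Rmax_def[symmetric] Rmin_def[symmetric] K_def[symmetric]
      g_def[symmetric] mult_minus_left .
qed

end
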